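(* Let $(X,\mathcal{F})$ be a Subset Avoider-Enforcer game and let $a,b\in X$ be distinct vertices with $L(a)\prec L(b)$. If a player (Avoider or Enforcer) has a winning strategy in this game, then she also has a winning strategy in which she always prefers claiming $a$ over claiming $b$, i.e. a winning strategy which, whenever it is her turn and both $a$ and $b$ are unclaimed, never claims $b$.
   Context: A Subset Avoider-Enforcer game $(X,\mathcal{F})$ consists of a finite board $X$ and a family $\mathcal{F}$ of pairs $(f,i_f)$ with $f\subseteq X$ and $i_f\in\mathbb{N}$. Avoider and Enforcer alternately claim one previously unclaimed element of $X$ per move (either player may be designated to start) until all of $X$ is claimed. Avoider loses (Enforcer wins) if for some $(f,i_f)\in\mathcal{F}$ she has claimed at least $i_f$ elements of $f$; otherwise Avoider wins. (An ordinary Avoider-Enforcer game with losing sets $\mathcal{F}'$ corresponds to taking pairs $(f,|f|)$ for $f\in\mathcal{F}'$.) For $v\in X$ let $L(v)=\{(f,i_f)\in\mathcal{F} : v\in f\}$. We write $L(a)\prec L(b)$ if for every $(f,i_f)\in L(a)$ there is $(g,i_g)\in L(b)$ with $g\subseteq f$ and $i_g\le i_f$. *)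

theory Defs
  imports Main
begin

datatype player = Avoider | Enforcer

fun opp :: "player \<Rightarrow> player" where
  "opp Avoider = Enforcer" | "opp Enforcer = Avoider"

text \<open>A history is the list of elements claimed so far, in order. The player
  who starts is s; players alternate.\<close>
definition turn :: "player \<Rightarrow> 'a list \<Rightarrow> player" where
  "turn s h = (if even (length h) then s else opp s)"

definition legal_hist :: "'a set \<Rightarrow> 'a list \<Rightarrow> bool" where
  "legal_hist X h \<longleftrightarrow> distinct h \<and> set h \<subseteq> X"

definition consistent ::
  "'a set \<Rightarrow> player \<Rightarrow> player \<Rightarrow> ('a list \<Rightarrow> 'a) \<Rightarrow> 'a list \<Rightarrow> bool" where
  "consistent X s p \<sigma> h \<longleftrightarrow> legal_hist X h \<and>
     (\<forall>k < length h. turn s (take k h) = p \<longrightarrow> h ! k = \<sigma> (take k h))"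

definition avoider_set :: "player \<Rightarrow> 'a list \<Rightarrow> 'a set" where
  "avoider_set s h = {h ! k | k. k < length h \<and> turn s (take k h) = Avoider}"

definition avoider_wins :: "('a set \<times> nat) set \<Rightarrow> 'a set \<Rightarrow> bool" where
  "avoider_wins F A \<longleftrightarrow> \<not> (\<exists>(f, i) \<in> F. card (A \<inter> f) \<ge> i)"

definition wins :: "('a set \<times> nat) set \<Rightarrow> player \<Rightarrow> player \<Rightarrow> 'a list \<Rightarrow> bool" where
  "wins F s p h \<longleftrightarrow> (case p of
      Avoider \<Rightarrow> avoider_wins F (avoider_set s h)
    | Enforcer \<Rightarrow> \<not> avoider_wins F (avoider_set s h))"

definition winning_strategy ::
  "'a set \<Rightarrow> ('a set \<times> nat) set \<Rightarrow> player \<Rightarrow> player \<Rightarrow> ('a list \<Rightarrow> 'a) \<Rightarrow> bool" where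
  "winning_strategy X F s p \<sigma> \<longleftrightarrow>
     (\<forall>h. consistent X s p \<sigma> h \<and> set h \<noteq> X \<and> turn s h = p \<longrightarrow> \<sigma> h \<in> X - set h) \<and>
     (\<forall>h. consistent X s p \<sigma> h \<and> set h = X \<longrightarrow> wins F s p h)"

definition prefers :: "'a set \<Rightarrow> player \<Rightarrow> player \<Rightarrow> ('a list \<Rightarrow> 'a) \<Rightarrow> 'a \<Rightarrow> 'a \<Rightarrow> bool" where
  "prefers X s p \<sigma> a b \<longleftrightarrow>
     (\<forall>h. consistent X s p \<sigma> h \<and> turn s h = p \<and> a \<notin> set h \<and> b \<notin> set h \<longrightarrow> \<sigma> h \<noteq> b)"

definition L :: "('a set \<times> nat) set \<Rightarrow> 'a \<Rightarrow> ('a set \<times> nat) set" where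
  "L F v = {(f, i) \<in> F. v \<in> f}"

definition prec :: "('a set \<times> nat) set \<Rightarrow> ('a set \<times> nat) set \<Rightarrow> bool" where
  "prec La Lb \<longleftrightarrow> (\<forall>(f, i) \<in> La. \<exists>(g, j) \<in> Lb. g \<subseteq> f \<and> j \<le> i)"

end

theory Submission
  imports Defs "HOL-Combinatorics.Transposition"
begin

text \<open>The player follows \<sigma> until the first time \<sigma> asks for b while a and b are both
  free; there she claims a instead, and from then on she plays \<sigma> in the mirror game in which
  a and b are interchanged. The real play is thus the image under the transposition (a b) of a
  \<sigma>-play, its shadow history, and Avoider's final set is the image of her set in the shadow.
  Avoider holds a in the real play if she is the player, and Enforcer holds it if he is, so in
  both cases the real outcome is at least as good for the player as that of the shadow.\<close>

lemma card_Int_le_card_transpose_image_Int: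
  assumes "finite f" and "a \<in> f \<Longrightarrow> b \<in> f" and "b \<in> C \<Longrightarrow> a \<in> C"
  shows "card (C \<inter> f) \<le> card (transpose a b ` C \<inter> f)"
proof (cases "a \<in> f")
  case True
  with assms(2) have "transpose a b ` (C \<inter> f) \<subseteq> transpose a b ` C \<inter> f"
    by (auto simp: transpose_def)
  then have "card (transpose a b ` (C \<inter> f)) \<le> card (transpose a b ` C \<inter> f)"
    using assms(1) by (intro card_mono) auto
  then show ?thesis
    by (simp add: card_image)
next
  case False
  with assms(3) have "C \<inter> f \<subseteq> transpose a b ` C \<inter> f"
    by (auto simp: in_transpose_image_iff transpose_def)
  then show ?thesis
    using assms(1) by (intro card_mono) auto
qed

lemma avoider_wins_of_transpose_image:
  assumes "\<And>f i. (f, i) \<in> F \<Longrightarrow> finite f" and "\<And>f i. (f, i) \<in> F \<Longrightarrow> a \<in> f \<Longrightarrow> b \<in> f"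
    and "b \<in> C \<Longrightarrow> a \<in> C"
    and "avoider_wins F (transpose a b ` C)"
  shows "avoider_wins F C"
  unfolding avoider_wins_def
proof clarify
  fix f i
  assume "(f, i) \<in> F" and "i \<le> card (C \<inter> f)"
  moreover from this(1) have "card (C \<inter> f) \<le> card (transpose a b ` C \<inter> f)"
    using assms(1-3) by (intro card_Int_le_card_transpose_image_Int)
  ultimately show False
    using assms(4) unfolding avoider_wins_def by fastforce
qed

lemma prec_L_mem:
  assumes "prec (L F a) (L F b)" and "(f, i) \<in> F" and "a \<in> f"
  shows "b \<in> f"
  using assms unfolding prec_def L_def by blast

lemma avoider_set_map: "avoider_set s (map g h) = g ` avoider_set s h"
proof -
  have "turn s (take k (map g h)) = turn s (take k h)" for k
    by (simp add: turn_def)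
  then show ?thesis
    unfolding avoider_set_def by force
qed

context
  fixes s p :: player and \<sigma> :: "'a list \<Rightarrow> 'a" and a b :: 'a
begin

definition diverted :: "'a list \<Rightarrow> bool" where
  "diverted h \<longleftrightarrow> (\<exists>t < length h. turn s (take t h) = p \<and> a \<notin> set (take t h) \<and>
     b \<notin> set (take t h) \<and> \<sigma> (take t h) = b \<and> h ! t = a)"

definition prefer_strategy :: "'a list \<Rightarrow> 'a" where
  "prefer_strategy h =
     (if diverted h then transpose a b (\<sigma> (map (transpose a b) h))
      else if a \<notin> set h \<and> b \<notin> set h \<and> \<sigma> h = b then a
      else \<sigma> h)"

definition shadow_history :: "'a list \<Rightarrow> 'a list" where
  "shadow_history h = (if diverted h then map (transpose a b) h else h)"

lemma diverted_take_iff: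
  assumes "t < length h" and "a \<notin> set (take t h)" and "h ! t = a"
    and "turn s (take t h) = p" and "b \<notin> set (take t h)" and "\<sigma> (take t h) = b"
  shows "diverted (take k h) \<longleftrightarrow> t < k"
proof
  assume "diverted (take k h)"
  then obtain j where "j < k" "j < length h" "h ! j = a"
    unfolding diverted_def by auto
  then show "t < k"
    using assms(2) by (metis in_set_conv_nth length_take min_less_iff_conj not_le_imp_less
        nth_take order.strict_trans1)
next
  assume "t < k"
  then show "diverted (take k h)"
    using assms unfolding diverted_def by (auto intro!: exI[of _ t])
qed

lemma diverted_take: "diverted (take k h) \<Longrightarrow> diverted h"
  unfolding diverted_def by auto

lemma diverted_imp_mem: "diverted h \<Longrightarrow> a \<in> set h"
  unfolding diverted_def by (auto simp: in_set_conv_nth)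

lemma prefer_strategy_eq_strategy:
  "\<not> diverted h \<Longrightarrow> prefer_strategy h \<noteq> a \<Longrightarrow> prefer_strategy h = \<sigma> h"
  by (auto simp: prefer_strategy_def)

lemma consistent_undiverted:
  assumes "consistent X s p prefer_strategy h" and "\<not> diverted h"
  shows "consistent X s p \<sigma> h"
  unfolding consistent_def
proof (intro conjI allI impI)
  show "legal_hist X h"
    using assms(1) by (simp add: consistent_def)
  fix k
  assume k: "k < length h" "turn s (take k h) = p"
  then have claim: "h ! k = prefer_strategy (take k h)"
    using assms(1) by (simp add: consistent_def)
  have "\<not> diverted (take k h)"
    using assms(2) diverted_take by blast
  moreover have "\<not> (a \<notin> set (take k h) \<and> b \<notin> set (take k h) \<and> \<sigma> (take k h) = b)"
  proof
    assume "a \<notin> set (take k h) \<and> b \<notin> set (take k h) \<and> \<sigma> (take k h) = b"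
    with claim k \<open>\<not> diverted (take k h)\<close> have "diverted h"
      unfolding diverted_def[of h] by (auto simp: prefer_strategy_def intro!: exI[of _ k])
    with assms(2) show False ..
  qed
  ultimately have "prefer_strategy (take k h) = \<sigma> (take k h)"
    by (auto simp: prefer_strategy_def)
  with claim show "h ! k = \<sigma> (take k h)"
    by simp
qed

lemma consistent_diverted:
  assumes "consistent X s p prefer_strategy h" and "diverted h" and "a \<in> X" and "b \<in> X"
  shows "consistent X s p \<sigma> (map (transpose a b) h)"
  unfolding consistent_def
proof (intro conjI allI impI)
  have "legal_hist X h"
    using assms(1) by (simp add: consistent_def)
  then show "legal_hist X (map (transpose a b) h)"
    using assms(3,4) by (auto simp: legal_hist_def distinct_map transpose_def)
  obtain t where t: "t < length h" "a \<notin> set (take t h)" "h ! t = a"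
    "turn s (take t h) = p" "b \<notin> set (take t h)" "\<sigma> (take t h) = b"
    using assms(2) unfolding diverted_def by blast
  fix k
  assume "k < length (map (transpose a b) h)" "turn s (take k (map (transpose a b) h)) = p"
  then have k: "k < length h" "turn s (take k h) = p"
    by (simp_all add: turn_def)
  then have claim: "h ! k = prefer_strategy (take k h)"
    using assms(1) by (simp add: consistent_def)
  consider "k < t" | "k = t" | "t < k"
    by linarith
  then show "map (transpose a b) h ! k = \<sigma> (take k (map (transpose a b) h))"
  proof cases
    case 1
    have "h ! k \<in> set (take t h)"
      using 1 t(1) by (auto simp: in_set_conv_nth)
    then have hk: "h ! k \<noteq> a" "h ! k \<noteq> b"
      using t(2,5) by auto
    have "\<not> diverted (take k h)"
      using diverted_take_iff[OF t] 1 by simp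
    then have "h ! k = \<sigma> (take k h)"
      using claim hk(1) prefer_strategy_eq_strategy by simp
    moreover have "map (transpose a b) (take k h) = take k h"
      using 1 t(2,5) set_take_subset_set_take[of k t h]
      by (intro map_idI transpose_apply_other) auto
    ultimately show ?thesis
      using hk k(1) by (simp add: take_map)
  next
    case 2
    have "map (transpose a b) (take t h) = take t h"
      using t(2,5) by (intro map_idI transpose_apply_other) auto
    then show ?thesis
      using 2 t by (simp add: take_map)
  next
    case 3
    then have "diverted (take k h)"
      using diverted_take_iff[OF t] by simp
    then show ?thesis
      using claim k(1) by (simp add: prefer_strategy_def take_map)
  qed
qed

lemma consistent_shadow_history:
  assumes "consistent X s p prefer_strategy h" and "a \<in> X" and "b \<in> X"
  shows "consistent X s p \<sigma> (shadow_history h)"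
  using assms consistent_diverted consistent_undiverted unfolding shadow_history_def by auto

lemma set_shadow_history_eq_iff:
  assumes "a \<in> X" and "b \<in> X"
  shows "set (shadow_history h) = X \<longleftrightarrow> set h = X"
proof -
  have "transpose a b ` X = X"
    using assms by simp
  moreover have "transpose a b ` set h = transpose a b ` X \<longleftrightarrow> set h = X"
    by (rule inj_image_eq_iff[OF inj_transpose])
  ultimately show ?thesis
    by (simp add: shadow_history_def)
qed

lemma turn_shadow_history: "turn s (shadow_history h) = turn s h"
  by (simp add: shadow_history_def turn_def)

lemma prefer_strategy_legal:
  assumes "winning_strategy X F s p \<sigma>" and "a \<in> X" and "b \<in> X"
    and "consistent X s p prefer_strategy h" and "set h \<noteq> X" and "turn s h = p"
  shows "prefer_strategy h \<in> X - set h"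
proof -
  have shadow_move: "\<sigma> (shadow_history h) \<in> X - set (shadow_history h)"
    using assms consistent_shadow_history set_shadow_history_eq_iff turn_shadow_history
    unfolding winning_strategy_def by metis
  show ?thesis
  proof (cases "diverted h")
    case True
    have "transpose a b ` X = X"
      using assms(2,3) by simp
    then show ?thesis
      using True shadow_move
      by (simp add: prefer_strategy_def shadow_history_def) (metis image_eqI transpose_involutory)
  next
    case False
    then show ?thesis
      using assms(2) shadow_move diverted_imp_mem
      by (auto simp: prefer_strategy_def shadow_history_def)
  qed
qed

lemma prefer_strategy_wins:
  assumes "winning_strategy X F s p \<sigma>" and "a \<in> X" and "b \<in> X"
    and fin: "\<And>f i. (f, i) \<in> F \<Longrightarrow> finite f"
    and ab: "\<And>f i. (f, i) \<in> F \<Longrightarrow> a \<in> f \<Longrightarrow> b \<in> f"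
    and "consistent X s p prefer_strategy h" and "set h = X"
  shows "wins F s p h"
proof -
  have shadow_wins: "wins F s p (shadow_history h)"
    using assms consistent_shadow_history set_shadow_history_eq_iff
    unfolding winning_strategy_def by metis
  show ?thesis
  proof (cases "diverted h")
    case False
    then show ?thesis
      using shadow_wins by (simp add: shadow_history_def)
  next
    case True
    then obtain t where t: "t < length h" "h ! t = a" "turn s (take t h) = p"
      unfolding diverted_def by blast
    have "distinct h"
      using assms(6) by (simp add: consistent_def legal_hist_def)
    then have p_claims_a: "a \<in> avoider_set s h \<longleftrightarrow> p = Avoider"
      using t by (auto simp: avoider_set_def nth_eq_iff_index_eq)
    define S where "S = avoider_set s h"
    have mirror: "wins F s p (map (transpose a b) h)"
      using shadow_wins True by (simp add: shadow_history_def)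
    show ?thesis
    proof (cases p)
      case Avoider
      then have "avoider_wins F (transpose a b ` S)"
        using mirror by (simp add: wins_def avoider_set_map S_def)
      moreover have "a \<in> S"
        using Avoider p_claims_a by (simp add: S_def)
      ultimately have "avoider_wins F S"
        by (auto intro: avoider_wins_of_transpose_image[OF fin ab])
      then show ?thesis
        using Avoider by (simp add: wins_def S_def)
    next
      case Enforcer
      then have "\<not> avoider_wins F (transpose a b ` S)"
        using mirror by (simp add: wins_def avoider_set_map S_def)
      moreover have "avoider_wins F (transpose a b ` S)" if "avoider_wins F S"
      proof (rule avoider_wins_of_transpose_image[OF fin ab])
        show "a \<in> transpose a b ` S" if "b \<in> transpose a b ` S"
          using that Enforcer p_claims_a by (simp add: S_def in_transpose_image_iff)
        show "avoider_wins F (transpose a b ` transpose a b ` S)"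
          using \<open>avoider_wins F S\<close> by (simp add: image_comp)
      qed
      ultimately have "\<not> avoider_wins F S"
        by blast
      then show ?thesis
        using Enforcer by (simp add: wins_def S_def)
    qed
  qed
qed

lemma winning_strategy_prefer_strategy:
  assumes "winning_strategy X F s p \<sigma>" and "a \<in> X" and "b \<in> X"
    and "\<And>f i. (f, i) \<in> F \<Longrightarrow> finite f" and "\<And>f i. (f, i) \<in> F \<Longrightarrow> a \<in> f \<Longrightarrow> b \<in> f"
  shows "winning_strategy X F s p prefer_strategy"
  unfolding winning_strategy_def
proof (intro conjI allI impI; elim conjE)
  fix h
  assume "consistent X s p prefer_strategy h" "set h \<noteq> X" "turn s h = p"
  then show "prefer_strategy h \<in> X - set h"
    by (rule prefer_strategy_legal[OF assms(1-3)])
next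
  fix h
  assume play: "consistent X s p prefer_strategy h" "set h = X"
  show "wins F s p h"
    by (rule prefer_strategy_wins[OF assms(1-3) _ _ play]) (fact assms(4,5))+
qed

lemma prefer_strategy_prefers:
  assumes "a \<noteq> b"
  shows "prefers X s p prefer_strategy a b"
proof -
  have "prefer_strategy h \<noteq> b" if "a \<notin> set h" and "b \<notin> set h" for h
  proof -
    have "\<not> diverted h"
      using that(1) diverted_imp_mem by blast
    then show ?thesis
      using that assms by (simp add: prefer_strategy_def)
  qed
  then show ?thesis
    by (simp add: prefers_def)
qed

end

theorem lemma1:
  fixes X :: "'a set" and F :: "('a set \<times> nat) set" and a b :: 'a
    and s p :: player and \<sigma> :: "'a list \<Rightarrow> 'a"
  assumes "finite X"
    and "\<forall>(f, i) \<in> F. f \<subseteq> X"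
    and "a \<in> X" and "b \<in> X" and "a \<noteq> b"
    and "prec (L F a) (L F b)"
    and "winning_strategy X F s p \<sigma>"
  shows "\<exists>\<sigma>'. winning_strategy X F s p \<sigma>' \<and> prefers X s p \<sigma>' a b"
proof -
  have fin: "finite f" if "(f, i) \<in> F" for f i
    using that assms(1,2) finite_subset by fast
  have "winning_strategy X F s p (prefer_strategy s p \<sigma> a b)"
    by (rule winning_strategy_prefer_strategy[OF assms(7,3,4)]) (fact fin prec_L_mem[OF assms(6)])+
  then show ?thesis
    using prefer_strategy_prefers[OF assms(5)] by blast
qed

end
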